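(* Let $\mathcal H$ be the Hermitian polar space of a non-degenerate $\sigma$-Hermitian form of finite Witt index $n\ge2$ and anisotropic defect $d>0$ (possibly infinite) over a field $\mathbb F$. Let $\{\{p_1,\dots,p_n\},\{p'_1,\dots,p'_n\}\}$ be a frame of $\mathcal H$ and let $F_n$ be the set of the $2^n$ maximal singular subspaces $\langle x_1,\dots,x_n\rangle$ with $x_i\in\{p_i,p'_i\}$ for each $i$. Then $F_n$ generates the dual polar space $\mathcal H_n$.
   Context: Setting: $h$ non-degenerate $\sigma$-Hermitian ($\sigma\ne\mathrm{id}$ involutory) on $V=V_1\oplus\cdots\oplus V_n\oplus V_0$ with $V_i$ pairwise orthogonal hyperbolic planes and $V_0$ anisotropic orthogonal to them, $d=\dim V_0$. Points of $\mathcal H$: totally isotropic 1-spaces; $x\perp y$ means $h(x,y)=0$. $S_k(\mathcal H)$: totally isotropic subspaces of dimension $k$. A frame is a pair of bases $\{p_1,\dots,p_n\}$, $\{p'_1,\dots,p'_n\}$ of two disjoint maximal totally isotropic subspaces such that $p_i\perp p'_j$ iff $i\ne j$. The dual polar space $\mathcal H_n$ has points $S_n(\mathcal H)$ and lines $\{Z\in S_n(\mathcal H): Z\supset X\}$ for $X\in S_{n-1}(\mathcal H)$. A set generates a point-line geometry if the smallest subspace (set closed under taking lines meeting it in $\ge2$ points) containing it is the whole point set. *)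

theory Defs
  imports "HOL.Vector_Spaces"
begin

definition inv_field_aut :: "('k::field \<Rightarrow> 'k) \<Rightarrow> bool" where
  "inv_field_aut \<sigma> \<longleftrightarrow>
     (\<forall>a b. \<sigma> (a + b) = \<sigma> a + \<sigma> b) \<and> (\<forall>a b. \<sigma> (a * b) = \<sigma> a * \<sigma> b) \<and>
     (\<forall>a. \<sigma> (\<sigma> a) = a) \<and> \<sigma> \<noteq> id"

definition sigma_hermitian ::
  "('k::field \<Rightarrow> 'v::ab_group_add \<Rightarrow> 'v) \<Rightarrow> ('k \<Rightarrow> 'k) \<Rightarrow> ('v \<Rightarrow> 'v \<Rightarrow> 'k) \<Rightarrow> bool" where
  "sigma_hermitian scale \<sigma> h \<longleftrightarrow>
     (\<forall>x y z. h (x + y) z = h x z + h y z) \<and>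
     (\<forall>a x y. h (scale a x) y = a * h x y) \<and>
     (\<forall>x y. h y x = \<sigma> (h x y))"

definition nondegenerate :: "('v::zero \<Rightarrow> 'v \<Rightarrow> 'k::field) \<Rightarrow> bool" where
  "nondegenerate h \<longleftrightarrow> (\<forall>x. (\<forall>y. h x y = 0) \<longrightarrow> x = 0)"

definition tot_iso :: "('v \<Rightarrow> 'v \<Rightarrow> 'k::field) \<Rightarrow> 'v set \<Rightarrow> bool" where
  "tot_iso h W \<longleftrightarrow> (\<forall>x\<in>W. \<forall>y\<in>W. h x y = 0)"

definition Sk ::
  "('k::field \<Rightarrow> 'v::ab_group_add \<Rightarrow> 'v) \<Rightarrow> ('v \<Rightarrow> 'v \<Rightarrow> 'k) \<Rightarrow> nat \<Rightarrow> 'v set set" where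
  "Sk scale h k = {W. module.subspace scale W \<and> tot_iso h W \<and>
      (\<exists>B. finite B \<and> card B = k \<and> module.independent scale B \<and> module.span scale B = W)}"

definition witt_index ::
  "('k::field \<Rightarrow> 'v::ab_group_add \<Rightarrow> 'v) \<Rightarrow> ('v \<Rightarrow> 'v \<Rightarrow> 'k) \<Rightarrow> nat \<Rightarrow> bool" where
  "witt_index scale h n \<longleftrightarrow> Sk scale h n \<noteq> {} \<and>
     (\<forall>W. module.subspace scale W \<and> tot_iso h W \<longrightarrow>
        (\<exists>B. finite B \<and> card B \<le> n \<and> module.independent scale B \<and> module.span scale B = W))"

text \<open>Positive anisotropic defect: V = V_1 + ... + V_n + V_0 with hyperbolic planes
  V_i = <e_i, f_i> and V_0 (their orthogonal complement) anisotropic and nonzero.\<close>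
definition positive_defect ::
  "('k::field \<Rightarrow> 'v::ab_group_add \<Rightarrow> 'v) \<Rightarrow> ('v \<Rightarrow> 'v \<Rightarrow> 'k) \<Rightarrow> nat \<Rightarrow> bool" where
  "positive_defect scale h n \<longleftrightarrow>
     (\<exists>e f :: nat \<Rightarrow> 'v.
        (\<forall>i<n. \<forall>j<n. h (e i) (e j) = 0 \<and> h (f i) (f j) = 0 \<and>
                      h (e i) (f j) = (if i = j then 1 else 0)) \<and>
        (let V0 = {v. \<forall>i<n. h v (e i) = 0 \<and> h v (f i) = 0} in
           (\<forall>v\<in>V0. h v v = 0 \<longrightarrow> v = 0) \<and> V0 \<noteq> {0}))"

definition is_frame ::
  "('k::field \<Rightarrow> 'v::ab_group_add \<Rightarrow> 'v) \<Rightarrow> ('v \<Rightarrow> 'v \<Rightarrow> 'k) \<Rightarrow> nat \<Rightarrow>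
   (nat \<Rightarrow> 'v) \<Rightarrow> (nat \<Rightarrow> 'v) \<Rightarrow> bool" where
  "is_frame scale h n p p' \<longleftrightarrow>
     (let P = module.span scale (p ` {..<n}); P' = module.span scale (p' ` {..<n}) in
        card (p ` {..<n}) = n \<and> module.independent scale (p ` {..<n}) \<and>
        card (p' ` {..<n}) = n \<and> module.independent scale (p' ` {..<n}) \<and>
        tot_iso h P \<and> tot_iso h P' \<and>
        (\<forall>W. module.subspace scale W \<and> tot_iso h W \<and> P \<subseteq> W \<longrightarrow> W = P) \<and>
        (\<forall>W. module.subspace scale W \<and> tot_iso h W \<and> P' \<subseteq> W \<longrightarrow> W = P') \<and>
        P \<inter> P' = {0} \<and>
        (\<forall>i<n. \<forall>j<n. h (p i) (p' j) = 0 \<longleftrightarrow> i \<noteq> j))"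

definition frame_subspaces ::
  "('k::field \<Rightarrow> 'v::ab_group_add \<Rightarrow> 'v) \<Rightarrow> nat \<Rightarrow> (nat \<Rightarrow> 'v) \<Rightarrow> (nat \<Rightarrow> 'v) \<Rightarrow> 'v set set" where
  "frame_subspaces scale n p p' =
     {module.span scale ((\<lambda>i. if c i then p i else p' i) ` {..<n}) | c :: nat \<Rightarrow> bool. True}"

definition dual_points ::
  "('k::field \<Rightarrow> 'v::ab_group_add \<Rightarrow> 'v) \<Rightarrow> ('v \<Rightarrow> 'v \<Rightarrow> 'k) \<Rightarrow> nat \<Rightarrow> 'v set set" where
  "dual_points scale h n = Sk scale h n"

definition dual_lines ::
  "('k::field \<Rightarrow> 'v::ab_group_add \<Rightarrow> 'v) \<Rightarrow> ('v \<Rightarrow> 'v \<Rightarrow> 'k) \<Rightarrow> nat \<Rightarrow> 'v set set set" where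
  "dual_lines scale h n = {{Z \<in> Sk scale h n. X \<subseteq> Z} | X. X \<in> Sk scale h (n - 1)}"

definition geom_subspace :: "'p set \<Rightarrow> 'p set set \<Rightarrow> 'p set \<Rightarrow> bool" where
  "geom_subspace P L S \<longleftrightarrow> S \<subseteq> P \<and>
     (\<forall>l\<in>L. (\<exists>a b. a \<noteq> b \<and> a \<in> l \<inter> S \<and> b \<in> l \<inter> S) \<longrightarrow> l \<subseteq> S)"

definition generates :: "'p set \<Rightarrow> 'p set set \<Rightarrow> 'p set \<Rightarrow> bool" where
  "generates P L G \<longleftrightarrow> \<Inter> {S. geom_subspace P L S \<and> G \<subseteq> S} = P"

end

theory Submission
  imports Defs
begin

text \<open>Let S be a subspace of the dual polar space containing the 2^n frame points. Say that the
  star of a totally isotropic subspace Y, i.e. the set of maximal singular subspaces through Y,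
  lies in S. The key step: if Y is orthogonal to a hyperbolic pair a, b and the stars of <Y, a>
  and <Y, b> lie in S, then so does the star of Y. A maximal M containing Y meets the orthogonal
  complement of {a, b} in codimension 1 or 2. In codimension 1 this intersection X lies in the
  two distinct points <X, a> and <X, b> of S, hence the whole line of points through X, in
  particular M, lies in S. In codimension 2, an anisotropic vector orthogonal to the relevant
  data (the defect is positive) together with two distinct elements of norm 1 (as \<sigma> is not
  the identity) yield an (n-1)-space of M and two further points through it that lie in S by
  the first case. Starting from the frame points and removing the pairs p_i, p'_i one at a
  time, the star of {0}, i.e. every point, lies in S.\<close>

definition frame_vec :: "(nat \<Rightarrow> 'v) \<Rightarrow> (nat \<Rightarrow> 'v) \<Rightarrow> (nat \<Rightarrow> bool) \<Rightarrow> nat \<Rightarrow> 'v" where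
  "frame_vec p p' c i = (if c i then p i else p' i)"

locale hermitian_form = vector_space scale
  for scale :: "'k::field \<Rightarrow> 'v::ab_group_add \<Rightarrow> 'v" +
  fixes \<sigma> :: "'k \<Rightarrow> 'k" and h :: "'v \<Rightarrow> 'v \<Rightarrow> 'k"
  assumes inv_aut: "inv_field_aut \<sigma>"
    and hermitian: "sigma_hermitian scale \<sigma> h"
begin

lemma sigma_add [simp]: "\<sigma> (a + b) = \<sigma> a + \<sigma> b"
  using inv_aut unfolding inv_field_aut_def by blast

lemma sigma_mult [simp]: "\<sigma> (a * b) = \<sigma> a * \<sigma> b"
  using inv_aut unfolding inv_field_aut_def by blast

lemma sigma_sigma [simp]: "\<sigma> (\<sigma> a) = a"
  using inv_aut unfolding inv_field_aut_def by blast

lemma sigma_not_fixed: obtains a where "\<sigma> a \<noteq> a"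
  using inv_aut unfolding inv_field_aut_def by (auto simp: fun_eq_iff)

lemma sigma_0 [simp]: "\<sigma> 0 = 0"
  using sigma_add[of 0 0] by (metis add.right_neutral add_cancel_left_right)

lemma sigma_eq_0_iff [simp]: "\<sigma> a = 0 \<longleftrightarrow> a = 0"
  by (metis sigma_0 sigma_sigma)

lemma sigma_1 [simp]: "\<sigma> 1 = 1"
proof -
  have "\<sigma> 1 * \<sigma> 1 = \<sigma> 1 * 1" using sigma_mult[of 1 1] by simp
  then show ?thesis by (metis mult_left_cancel sigma_eq_0_iff zero_neq_one)
qed

lemma sigma_minus [simp]: "\<sigma> (- a) = - \<sigma> a"
  using sigma_add[of a "- a"] by (simp add: eq_neg_iff_add_eq_0 add.commute)

lemma sigma_inverse [simp]: "\<sigma> (inverse a) = inverse (\<sigma> a)"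
proof (cases "a = 0")
  case False
  then have "\<sigma> a * \<sigma> (inverse a) = 1" using sigma_mult[of a "inverse a"] by simp
  then show ?thesis by (metis inverse_unique)
qed simp

lemma sigma_divide [simp]: "\<sigma> (a / b) = \<sigma> a / \<sigma> b"
  by (simp add: divide_inverse)

lemma h_add_left [simp]: "h (x + y) z = h x z + h y z"
  using hermitian unfolding sigma_hermitian_def by blast

lemma h_scale_left [simp]: "h (scale a x) y = a * h x y"
  using hermitian unfolding sigma_hermitian_def by blast

lemma h_conj_sym: "h y x = \<sigma> (h x y)"
  using hermitian unfolding sigma_hermitian_def by blast

lemma h_add_right [simp]: "h x (y + z) = h x y + h x z"
  by (metis h_conj_sym h_add_left sigma_add)

lemma h_scale_right [simp]: "h x (scale a y) = \<sigma> a * h x y"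
  by (metis h_conj_sym h_scale_left sigma_mult sigma_sigma)

lemma h_zero_left [simp]: "h 0 y = 0"
  using h_add_left[of 0 0 y] by (metis add.right_neutral add_cancel_left_right)

lemma h_zero_right [simp]: "h x 0 = 0"
  using h_add_right[of x 0 0] by (metis add.right_neutral add_cancel_left_right)

lemma h_minus_left [simp]: "h (- x) y = - h x y"
  using h_add_left[of x "- x" y] by (simp add: eq_neg_iff_add_eq_0 add.commute)

lemma h_minus_right [simp]: "h x (- y) = - h x y"
  using h_add_right[of x y "- y"] by (simp add: eq_neg_iff_add_eq_0 add.commute)

lemma h_diff_left [simp]: "h (x - y) z = h x z - h y z"
  using h_add_left[of x "- y" z] by simp

lemma h_diff_right [simp]: "h x (y - z) = h x y - h x z"
  using h_add_right[of x y "- z"] by simp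

lemma h_eq_0_commute: "h x y = 0 \<longleftrightarrow> h y x = 0"
  by (metis h_conj_sym sigma_eq_0_iff)

lemma sigma_h_self: "\<sigma> (h x x) = h x x"
  by (metis h_conj_sym)

lemma h_eq_0_span:
  assumes "\<forall>y\<in>B. h y g = 0" and "x \<in> span B"
  shows "h x g = 0"
  using assms(2) by (induction rule: span_induct_alt) (use assms(1) in simp_all)

lemma tot_iso_span:
  assumes "\<forall>x\<in>A. \<forall>y\<in>A. h x y = 0"
  shows "tot_iso h (span A)"
  unfolding tot_iso_def
proof (intro ballI)
  fix x y assume xy: "x \<in> span A" "y \<in> span A"
  have "\<forall>z\<in>A. h z x = 0"
    using h_eq_0_span[OF _ xy(1)] assms h_eq_0_commute by blast
  then show "h x y = 0" using h_eq_0_span[OF _ xy(2)] h_eq_0_commute by blast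
qed

lemma not_in_span_if_perp:
  assumes "\<forall>y\<in>B. h y g = 0" and "h x g \<noteq> 0"
  shows "x \<notin> span B"
  using h_eq_0_span[OF assms(1)] assms(2) by blast

lemma in_span_insert_perp:
  assumes "z \<in> span (insert x B)" "\<forall>y\<in>B. h y g = 0" "h x g \<noteq> 0" "h z g = 0"
  shows "z \<in> span B"
proof -
  obtain k where k: "z - scale k x \<in> span B" using assms(1) span_breakdown_eq by blast
  then have "k * h x g = 0" using h_eq_0_span[OF assms(2) k] assms(4) by simp
  then show ?thesis using k assms(3) by simp
qed

lemma biorthogonal_independent:
  assumes "\<forall>i\<in>I. \<forall>j\<in>I. h (g i) (g' j) = 0 \<longleftrightarrow> i \<noteq> j"
  shows "independent (g ` I)" and "inj_on g I"
proof
  assume "dependent (g ` I)"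
  then obtain i where i: "i \<in> I" "g i \<in> span (g ` I - {g i})"
    unfolding dependent_def by blast
  have "\<forall>y\<in>g ` I - {g i}. h y (g' i) = 0" using i(1) assms by auto
  then show False using not_in_span_if_perp i assms by blast
next
  show "inj_on g I" using assms by (metis inj_onI)
qed

lemma exists_independent_perp_vector:
  assumes "finite T" "independent T"
  obtains B where "B \<subseteq> span T" "\<forall>y\<in>B. h y g = 0" "independent B" "finite B"
    "card T \<le> card B + 1"
proof (cases "\<forall>t\<in>T. h t g = 0")
  case True
  then show ?thesis using that[of T] assms span_superset by simp
next
  case False
  then obtain t0 where t0: "t0 \<in> T" "h t0 g \<noteq> 0" by blast
  define K where "K = {y \<in> span T. h y g = 0}"
  obtain B where B: "B \<subseteq> K" "independent B" "K \<subseteq> span B"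
    by (rule maximal_independent_subset_extend[of "{}" K]) (auto simp: independent_empty)
  have BT: "B \<subseteq> span T" and Bg: "\<forall>y\<in>B. h y g = 0" using B(1) K_def by auto
  have fB: "finite B" using independent_span_bound[OF assms(1) B(2) BT] by blast
  have "T \<subseteq> span (insert t0 B)"
  proof
    fix t assume t: "t \<in> T"
    have "t - scale (h t g / h t0 g) t0 \<in> K"
      using t t0 unfolding K_def by (simp add: span_base span_diff span_scale)
    then show "t \<in> span (insert t0 B)" using B(3) span_breakdown_eq by blast
  qed
  then have "card T \<le> card (insert t0 B)" using independent_span_bound[OF _ assms(2)] fB by blast
  also have "\<dots> \<le> card B + 1" using fB by (simp add: card_insert_if)
  finally show ?thesis using that B(2) BT fB Bg by blast
qed

lemma exists_independent_perp:
  assumes "finite C" "finite T" "independent T"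
  obtains B where "B \<subseteq> span T" "\<forall>y\<in>B. \<forall>c\<in>C. h y c = 0" "independent B" "finite B"
    "card T \<le> card B + card C"
  using assms
proof (induction C arbitrary: thesis rule: finite_induct)
  case empty
  then show ?case using span_superset[of T] by simp
next
  case (insert g C)
  obtain B1 where B1: "B1 \<subseteq> span T" "\<forall>y\<in>B1. \<forall>c\<in>C. h y c = 0" "independent B1" "finite B1"
      "card T \<le> card B1 + card C"
    using insert.IH insert.prems(2,3) by blast
  obtain B2 where B2: "B2 \<subseteq> span B1" "\<forall>y\<in>B2. h y g = 0" "independent B2" "finite B2"
      "card B1 \<le> card B2 + 1"
    using exists_independent_perp_vector[OF B1(4,3)] by blast
  have "B2 \<subseteq> span T" using B1(1) B2(1) by (metis span_mono span_span subset_trans)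
  moreover have "\<forall>y\<in>B2. \<forall>c\<in>insert g C. h y c = 0" using B1(2) B2(1,2) h_eq_0_span by blast
  moreover have "card T \<le> card B2 + card (insert g C)" using B1(5) B2(5) insert(1,2) by simp
  ultimately show ?case using insert.prems(1) B2(3,4) by blast
qed

lemma exists_perp_outside_span:
  assumes "finite BM" "independent BM" "finite B" "finite G" "card G + card B < card BM"
  obtains x where "x \<in> span BM" "\<forall>g\<in>G. h x g = 0" "x \<notin> span B"
proof -
  obtain T where T: "T \<subseteq> span BM" "\<forall>y\<in>T. \<forall>g\<in>G. h y g = 0" "independent T"
      "finite T" "card BM \<le> card T + card G"
    by (rule exists_independent_perp[OF assms(4,1,2)])
  have "\<not> T \<subseteq> span B"
  proof
    assume "T \<subseteq> span B"
    then have "card T \<le> card B" using independent_span_bound[OF assms(3) T(3)] by blast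
    then show False using T(5) assms(5) by linarith
  qed
  then show ?thesis using that T(1,2) by blast
qed

lemma exists_trace_nonzero: obtains s where "s + \<sigma> s \<noteq> 0"
proof (rule ccontr)
  assume "\<not> thesis"
  then have trace0: "\<And>s. s + \<sigma> s = 0" using that by blast
  obtain a where a: "\<sigma> a \<noteq> a" using sigma_not_fixed by blast
  have "(1::'k) + 1 = 0" using trace0[of 1] by simp
  then have "a + a = 0" by (metis distrib_right mult_1 mult_zero_left)
  then have "- a = a" by (rule minus_unique)
  moreover have "\<sigma> a = - a" using trace0[of a] by (simp add: eq_neg_iff_add_eq_0 add.commute)
  ultimately show False using a by simp
qed

lemma trace_surjective:
  assumes "\<sigma> w = w"
  obtains s where "s + \<sigma> s = w"
proof -
  obtain t where t: "t + \<sigma> t \<noteq> 0" using exists_trace_nonzero by blast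
  define T where "T = t + \<sigma> t"
  have "\<sigma> T = T" unfolding T_def by (simp add: add.commute)
  define s where "s = t * (w / T)"
  have "\<sigma> s = \<sigma> t * (w / T)" unfolding s_def using \<open>\<sigma> T = T\<close> assms by simp
  then have "s + \<sigma> s = T * (w / T)" unfolding s_def T_def by (metis distrib_right)
  then show ?thesis using that t T_def by simp
qed

lemma exists_norm_one_ne_1: obtains \<rho> where "\<rho> * \<sigma> \<rho> = 1" "\<rho> \<noteq> 1"
proof -
  obtain a where a: "\<sigma> a \<noteq> a" using sigma_not_fixed by blast
  then have "a \<noteq> 0" by auto
  then show ?thesis using that[of "\<sigma> a / a"] a by (simp add: divide_eq_1_iff)
qed

lemma h_eq_0_if_isotropic_line:
  assumes "h x x = 0" "h y y = 0" "\<And>c. h (x + scale c y) (x + scale c y) = 0"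
  shows "h x y = 0"
proof -
  define t where "t = h x y"
  have e: "\<sigma> c * t + c * \<sigma> t = 0" for c
    using assms(3)[of c] assms(1,2) h_conj_sym[of x y] by (simp add: t_def add.commute)
  then have "\<sigma> t = - t" using e[of 1] by (simp add: eq_neg_iff_add_eq_0 add.commute)
  moreover obtain a where a: "\<sigma> a \<noteq> a" using sigma_not_fixed by blast
  ultimately have "(\<sigma> a - a) * t = 0" using e[of a] by (simp add: algebra_simps)
  then show ?thesis using a unfolding t_def by simp
qed

lemma split_off_hyperbolic_pair:
  assumes ab: "h a a = 0" "h b b = 0" "h a b \<noteq> 0"
    and x: "h xa xa = 0" "h xb xb = 0" "h xa xb = 0" "h xa a = 0" "h xb b = 0"
      "h xa b \<noteq> 0" "h xb a \<noteq> 0"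
  obtains c c' \<alpha> \<beta> where "xa = c + scale \<alpha> a" "xb = c' + scale \<beta> b"
    "h c c = 0" "h c' c' = 0" "h c c' \<noteq> 0" "h c a = 0" "h c b = 0" "h c' a = 0" "h c' b = 0"
proof -
  have ba: "h b a \<noteq> 0" and ax: "h a xa = 0" "h b xb = 0"
    using ab(3) x(4,5) h_eq_0_commute by blast+
  define \<alpha> where "\<alpha> = h xa b / h a b"
  define \<beta> where "\<beta> = h xb a / h b a"
  have \<alpha>e: "\<alpha> * h a b = h xa b" and \<beta>e: "\<beta> * h b a = h xb a"
    unfolding \<alpha>_def \<beta>_def using ab(3) ba by simp_all
  have \<alpha>0: "\<alpha> \<noteq> 0" and \<beta>0: "\<beta> \<noteq> 0" using \<alpha>e \<beta>e x(6,7) by auto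
  define c where "c = xa - scale \<alpha> a"
  define c' where "c' = xb - scale \<beta> b"
  have "h a xb = \<sigma> (\<beta> * h b a)" using \<beta>e h_conj_sym by metis
  then have "h a xb = \<sigma> \<beta> * h a b" using h_conj_sym[of a b] by simp
  then have "h c c' = - (\<alpha> * \<sigma> \<beta> * h a b)"
    unfolding c_def c'_def using x(3) \<alpha>e[symmetric] ab(2) by (simp add: algebra_simps)
  then have "h c c' \<noteq> 0" using \<alpha>0 \<beta>0 ab(3) by simp
  moreover have "h c c = 0" "h c' c' = 0" "h c a = 0" "h c b = 0" "h c' a = 0" "h c' b = 0"
    unfolding c_def c'_def using ab x ax \<alpha>e \<beta>e by simp_all
  ultimately show ?thesis using that[of c \<alpha> c' \<beta>] unfolding c_def c'_def by simp
qed

text \<open>The norm h w w is a trace s + \<sigma> s, and \<mu> is chosen to cancel it.\<close>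
lemma isotropic_pencil:
  assumes c: "h c c = 0" "h c' c' = 0" "h c c' \<noteq> 0"
    and w: "h w c = 0" "h w c' = 0" "h w w \<noteq> 0"
  obtains \<mu> \<nu> where "\<mu> \<noteq> 0" "h (c + scale \<mu> c') (c + scale \<nu> c') = 0"
    "\<And>r. r * \<sigma> r = 1 \<Longrightarrow> h (c + scale \<mu> c' + scale r w) (c + scale \<mu> c' + scale r w) = 0"
proof -
  define \<delta> where "\<delta> = h c c'"
  have \<delta>: "\<delta> \<noteq> 0" "\<sigma> \<delta> \<noteq> 0" using c(3) unfolding \<delta>_def by simp_all
  have sym: "h c' c = \<sigma> \<delta>" "h c w = 0" "h c' w = 0"
    unfolding \<delta>_def using h_conj_sym w(1,2) h_eq_0_commute by blast+
  obtain s where s: "s + \<sigma> s = h w w" using trace_surjective sigma_h_self by blast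
  define \<mu> where "\<mu> = - s / \<sigma> \<delta>"
  define \<nu> where "\<nu> = \<sigma> s / \<sigma> \<delta>"
  have "s \<noteq> 0" using s w(3) by auto
  then have "\<mu> \<noteq> 0" unfolding \<mu>_def using \<delta> by simp
  moreover have "h (c + scale \<mu> c') (c + scale \<nu> c') = 0"
    using c sym(1) \<delta> unfolding \<mu>_def \<nu>_def by (simp add: \<delta>_def)
  moreover have "h (c + scale \<mu> c' + scale r w) (c + scale \<mu> c' + scale r w) = 0"
    if r: "r * \<sigma> r = 1" for r
  proof -
    have "h (c + scale \<mu> c' + scale r w) (c + scale \<mu> c' + scale r w)
        = \<sigma> \<mu> * \<delta> + \<mu> * \<sigma> \<delta> + r * \<sigma> r * h w w"
      using c(1,2) w(1,2) sym unfolding \<delta>_def by (simp add: algebra_simps)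
    also have "\<dots> = - \<sigma> s - s + h w w" using \<delta> r unfolding \<mu>_def by simp
    finally show ?thesis by (simp add: s[symmetric])
  qed
  ultimately show ?thesis using that by blast
qed

lemma span_in_Sk:
  assumes "finite B" "independent B" "card B = k" "\<forall>x\<in>B. \<forall>y\<in>B. h x y = 0"
  shows "span B \<in> Sk scale h k"
  unfolding Sk_def using assms tot_iso_span by blast

lemma SkE:
  assumes "M \<in> Sk scale h k"
  obtains B where "finite B" "independent B" "card B = k" "span B = M" "subspace M"
    "\<forall>x\<in>M. \<forall>y\<in>M. h x y = 0"
  using assms unfolding Sk_def tot_iso_def by blast

lemma frame_orthogonality:
  assumes "is_frame scale h n p p'" "i < n" "j < n"
  shows "h (p i) (p j) = 0" "h (p' i) (p' j) = 0" "h (p i) (p' j) = 0 \<longleftrightarrow> i \<noteq> j"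
  using assms span_base unfolding is_frame_def Let_def tot_iso_def by auto

lemma frame_vec_basis:
  assumes "is_frame scale h n p p'" "I \<subseteq> {..<n}"
  shows "independent (frame_vec p p' c ` I)" "inj_on (frame_vec p p' c) I"
    "\<forall>x\<in>frame_vec p p' c ` I. \<forall>y\<in>frame_vec p p' c ` I. h x y = 0"
proof -
  have frame: "h (p i) (p j) = 0" "h (p' i) (p' j) = 0" "h (p i) (p' j) = 0 \<longleftrightarrow> i \<noteq> j"
    "h (p' i) (p j) = 0 \<longleftrightarrow> i \<noteq> j" if "i \<in> I" "j \<in> I" for i j
  proof -
    have "i < n" "j < n" using that assms(2) by auto
    then show "h (p i) (p j) = 0" "h (p' i) (p' j) = 0" "h (p i) (p' j) = 0 \<longleftrightarrow> i \<noteq> j"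
      "h (p' i) (p j) = 0 \<longleftrightarrow> i \<noteq> j"
      using frame_orthogonality[OF assms(1)] h_eq_0_commute[of "p' i" "p j"] by auto
  qed
  have "\<forall>i\<in>I. \<forall>j\<in>I. h (frame_vec p p' c i) (frame_vec p p' (Not \<circ> c) j) = 0 \<longleftrightarrow> i \<noteq> j"
  proof (intro ballI)
    fix i j assume "i \<in> I" "j \<in> I"
    then show "h (frame_vec p p' c i) (frame_vec p p' (Not \<circ> c) j) = 0 \<longleftrightarrow> i \<noteq> j"
      using frame[of i j] unfolding frame_vec_def by (cases "c i"; cases "c j") auto
  qed
  then show "independent (frame_vec p p' c ` I)" "inj_on (frame_vec p p' c) I"
    by (rule biorthogonal_independent)+
  show "\<forall>x\<in>frame_vec p p' c ` I. \<forall>y\<in>frame_vec p p' c ` I. h x y = 0"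
  proof (intro ballI)
    fix x y assume "x \<in> frame_vec p p' c ` I" "y \<in> frame_vec p p' c ` I"
    then obtain i j where "i \<in> I" "j \<in> I" "x = frame_vec p p' c i" "y = frame_vec p p' c j"
      by blast
    then show "h x y = 0"
      using frame[of i j] unfolding frame_vec_def by (cases "c i"; cases "c j"; cases "i = j") auto
  qed
qed

lemma span_insert_translate_ne:
  assumes B: "\<forall>y\<in>B. h y b = 0 \<and> h y c = 0 \<and> h y w = 0"
    and "h x b \<noteq> 0" "h z b = 0" "h z c \<noteq> 0" "h w b = 0" "h w c = 0" "h w w \<noteq> 0" "t \<noteq> 0"
  shows "span (insert z (insert x B)) \<noteq> span (insert (z + scale t w) (insert x B))"
proof
  assume eq: "span (insert z (insert x B)) = span (insert (z + scale t w) (insert x B))"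
  have swap: "insert z (insert x B) = insert x (insert z B)" by blast
  have "z + scale t w \<in> span (insert x (insert z B))"
    unfolding swap[symmetric] eq by (rule span_base) simp
  moreover have "z \<in> span (insert x (insert z B))" by (rule span_base) simp
  ultimately have "z + scale t w - z \<in> span (insert x (insert z B))" by (rule span_diff)
  then have "scale t w \<in> span (insert x (insert z B))" by (simp only: add_diff_cancel_left')
  then have "scale (inverse t) (scale t w) \<in> span (insert x (insert z B))" by (rule span_scale)
  moreover have "scale (inverse t) (scale t w) = w" using assms(8) by simp
  ultimately have "w \<in> span (insert x (insert z B))" by simp
  then have "w \<in> span (insert z B)" by (rule in_span_insert_perp[where g = b]) (use assms in auto)
  then have "w \<in> span B" by (rule in_span_insert_perp[where g = c]) (use assms in auto)
  then have "h w w = 0" using h_eq_0_span[of B w] B by blast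
  then show False using assms(7) by blast
qed


text \<open>The two points are c + \<mu> c' + r w for r = 1 and for some other r of norm 1.\<close>
lemma two_isotropic_points_perp:
  assumes b: "h b b = 0"
    and c: "h c c = 0" "h c' c' = 0" "h c c' \<noteq> 0" "h c a = 0" "h c b = 0" "h c' a = 0" "h c' b = 0"
    and w: "h w w \<noteq> 0" "h w a = 0" "h w b = 0" "h w c = 0" "h w c' = 0"
    and B: "\<forall>y\<in>B. h y b = 0 \<and> h y c = 0 \<and> h y c' = 0 \<and> h y w = 0"
    and x: "xa = c + scale \<alpha> a" "xb = c' + scale \<beta> b" "h xa b \<noteq> 0"
  obtains \<nu> z1 z2 where "xa + scale \<nu> xb \<notin> span B"
    "\<forall>z\<in>{z1, z2}. h z z = 0 \<and> h z (xa + scale \<nu> xb) = 0 \<and> h z a = 0 \<and> h z b = 0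
       \<and> (\<forall>y\<in>B. h y z = 0) \<and> z \<notin> span (insert (xa + scale \<nu> xb) B)"
    "span (insert z1 (insert (xa + scale \<nu> xb) B)) \<noteq> span (insert z2 (insert (xa + scale \<nu> xb) B))"
proof -
  obtain \<mu> \<nu> where \<mu>\<nu>: "\<mu> \<noteq> 0" "h (c + scale \<mu> c') (c + scale \<nu> c') = 0"
      "\<And>r. r * \<sigma> r = 1 \<Longrightarrow> h (c + scale \<mu> c' + scale r w) (c + scale \<mu> c' + scale r w) = 0"
    using isotropic_pencil[OF c(1-3) w(4,5,1)] by blast
  obtain \<rho> where \<rho>: "\<rho> * \<sigma> \<rho> = 1" "\<rho> \<noteq> 1" by (rule exists_norm_one_ne_1)
  define x where "x = xa + scale \<nu> xb"
  define z where "z r = c + scale \<mu> c' + scale r w" for r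
  have "h xb b = 0" unfolding x(2) using b c(7) by simp
  then have xb: "h x b \<noteq> 0" unfolding x_def using x(3) by simp
  have "x \<notin> span B" using not_in_span_if_perp[of B b x] B xb by blast
  have z: "h (z r) (z r) = 0 \<and> h (z r) x = 0 \<and> h (z r) a = 0 \<and> h (z r) b = 0 \<and> h (z r) c \<noteq> 0
      \<and> (\<forall>y\<in>B. h y (z r) = 0)" if "r * \<sigma> r = 1" for r
  proof (intro conjI)
    show "h (z r) (z r) = 0" unfolding z_def by (rule \<mu>\<nu>(3)[OF that])
    show za: "h (z r) a = 0" and zb: "h (z r) b = 0" unfolding z_def using c(4-7) w(2,3) by simp_all
    have "h c' c \<noteq> 0" using c(3) h_eq_0_commute by blast
    then show "h (z r) c \<noteq> 0" unfolding z_def using c(1) w(4) \<mu>\<nu>(1) by simp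
    show "\<forall>y\<in>B. h y (z r) = 0" unfolding z_def using B by simp
    have "h (z r) x = h (z r) c + \<sigma> \<nu> * h (z r) c'"
      unfolding x_def x(1,2) using za zb by simp
    also have "\<dots> = h (c + scale \<mu> c') (c + scale \<nu> c')" unfolding z_def using w(4,5) by simp
    finally show "h (z r) x = 0" using \<mu>\<nu>(2) by simp
  qed
  have zX: "z r \<notin> span (insert x B)" if "r * \<sigma> r = 1" for r
  proof
    assume "z r \<in> span (insert x B)"
    then have "z r \<in> span B" by (rule in_span_insert_perp[where g = b]) (use z[OF that] B xb in auto)
    then show False using h_eq_0_span[of B c "z r"] B z[OF that] by blast
  qed
  have one: "1 * \<sigma> 1 = 1" by simp
  have "span (insert (z 1) (insert x B)) \<noteq> span (insert (z 1 + scale (\<rho> - 1) w) (insert x B))"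
    by (rule span_insert_translate_ne[where b = b and c = c]) (use B w z[OF one] xb \<rho>(2) in auto)
  moreover have "z 1 + scale (\<rho> - 1) w = z \<rho>" unfolding z_def by (simp add: algebra_simps)
  ultimately show ?thesis
    using that[of \<nu> "z 1" "z \<rho>"] \<open>x \<notin> span B\<close> z[OF one] z[OF \<rho>(1)] zX[OF one] zX[OF \<rho>(1)]
    unfolding x_def by simp
qed
end

locale hermitian_polar_space = hermitian_form +
  fixes n :: nat
  assumes witt: "witt_index scale h n" and n_ge_2: "n \<ge> 2"
    and defect: "positive_defect scale h n"
begin

lemma tot_iso_card_le:
  assumes "independent T" "\<forall>x\<in>T. \<forall>y\<in>T. h x y = 0"
  shows "finite T" "card T \<le> n"
proof -
  have "subspace (span T)" "tot_iso h (span T)" using tot_iso_span[OF assms(2)] by simp_all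
  then obtain B where B: "finite B" "card B \<le> n" "span B = span T"
    using witt unfolding witt_index_def by blast
  have "T \<subseteq> span B" using B(3) span_superset by blast
  then have "finite T \<and> card T \<le> card B"
    using independent_span_bound[OF B(1) assms(1)] by blast
  then show "finite T" "card T \<le> n" using B(2) by auto
qed

lemma exists_independent_2n_plus_1:
  obtains E where "finite E" "independent E" "card E = 2 * n + 1"
proof -
  obtain e f :: "nat \<Rightarrow> _" where
    ef: "\<forall>i<n. \<forall>j<n. h (e i) (e j) = 0 \<and> h (f i) (f j) = 0 \<and> h (e i) (f j) = (if i = j then 1 else 0)"
    and V0: "\<forall>v\<in>{v. \<forall>i<n. h v (e i) = 0 \<and> h v (f i) = 0}. h v v = 0 \<longrightarrow> v = 0"
      "{v. \<forall>i<n. h v (e i) = 0 \<and> h v (f i) = 0} \<noteq> {0}"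
    using defect unfolding positive_defect_def Let_def by blast
  obtain v where v: "v \<noteq> 0" "\<forall>i<n. h v (e i) = 0 \<and> h v (f i) = 0"
    using V0(2) by auto
  have vv: "h v v \<noteq> 0" using V0(1) v by blast
  have fe: "\<forall>i<n. \<forall>j<n. h (f i) (e j) = (if i = j then 1 else 0)"
    using ef by (metis h_conj_sym sigma_0 sigma_1)
  have ev: "\<forall>i<n. h (e i) v = 0 \<and> h (f i) v = 0" using v(2) h_eq_0_commute by blast
  define g where "g i = (if i < n then e i else if i < 2 * n then f (i - n) else v)" for i
  define g' where "g' i = (if i < n then f i else if i < 2 * n then e (i - n) else v)" for i
  have "\<forall>i\<in>{..<2 * n + 1}. \<forall>j\<in>{..<2 * n + 1}. h (g i) (g' j) = 0 \<longleftrightarrow> i \<noteq> j"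
  proof (intro ballI)
    fix i j assume i: "i \<in> {..<2 * n + 1}" and j: "j \<in> {..<2 * n + 1}"
    show "h (g i) (g' j) = 0 \<longleftrightarrow> i \<noteq> j"
      unfolding g_def g'_def using i j ef fe ev v(2) vv
      by (cases "i < n"; cases "j < n"; cases "i < 2 * n"; cases "j < 2 * n") auto
  qed
  then have "independent (g ` {..<2 * n + 1})" "inj_on g {..<2 * n + 1}"
    by (rule biorthogonal_independent)+
  moreover have "card (g ` {..<2 * n + 1}) = 2 * n + 1"
    using \<open>inj_on g {..<2 * n + 1}\<close> by (simp add: card_image)
  ultimately show ?thesis using that by blast
qed

text \<open>In a (2n+1)-dimensional subspace the orthogonal complement of C has dimension at least
  n - 1; if it were totally isotropic, adding a and c would exceed the Witt index.\<close>
lemma exists_anisotropic_perp: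
  assumes C: "finite C" "card C \<le> n + 2" and inC: "a \<in> C" "b \<in> C" "c \<in> C" "c' \<in> C"
    and h: "h a a = 0" "h c c = 0" "h a c = 0" "h c b = 0" "h a b \<noteq> 0" "h c c' \<noteq> 0"
  obtains w where "\<forall>y\<in>C. h w y = 0" "h w w \<noteq> 0"
proof (rule ccontr)
  assume "\<not> thesis"
  then have iso: "\<And>w. \<forall>y\<in>C. h w y = 0 \<Longrightarrow> h w w = 0" using that by blast
  obtain E where E: "finite E" "independent E" "card E = 2 * n + 1"
    by (rule exists_independent_2n_plus_1)
  obtain T where T: "T \<subseteq> span E" "\<forall>y\<in>T. \<forall>x\<in>C. h y x = 0" "independent T" "finite T"
      "card E \<le> card T + card C"
    by (rule exists_independent_perp[OF C(1) E(1,2)])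
  have perp: "\<forall>x\<in>span T. \<forall>y\<in>C. h x y = 0" using T(2) h_eq_0_span by blast
  have isoT: "h x x = 0" if "x \<in> span T" for x using iso perp that by blast
  have totT: "h x y = 0" if "x \<in> span T" "y \<in> span T" for x y
  proof (rule h_eq_0_if_isotropic_line)
    show "h x x = 0" "h y y = 0" using isoT that by blast+
    show "h (x + scale k y) (x + scale k y) = 0" for k
      using that by (intro isoT span_add span_scale)
  qed
  have cT: "c \<notin> span T" using not_in_span_if_perp[of T c' c] T(2) inC(4) h(6) by blast
  have "\<forall>y\<in>insert c T. h y b = 0" using T(2) inC(2) h(4) by simp
  then have aT: "a \<notin> span (insert c T)" using not_in_span_if_perp h(5) by blast
  have "independent (insert a (insert c T))" using T(3) cT aT by (simp add: independent_insertI)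
  moreover have "\<forall>x\<in>insert a (insert c T). \<forall>y\<in>insert a (insert c T). h x y = 0"
  proof -
    have "\<forall>y\<in>T. h y a = 0 \<and> h a y = 0 \<and> h y c = 0 \<and> h c y = 0"
      using T(2) inC(1,3) h_eq_0_commute by blast
    moreover have "h c a = 0" using h(3) h_eq_0_commute by blast
    ultimately show ?thesis using totT[OF span_base span_base] h(1,2,3) by auto
  qed
  ultimately have "card (insert a (insert c T)) \<le> n" by (rule tot_iso_card_le)
  moreover have "c \<notin> T" "a \<notin> insert c T" using cT aT span_base by blast+
  then have "card (insert a (insert c T)) = card T + 2" using T(4) by simp
  ultimately show False using T(5) E(3) C(2) by linarith
qed

lemma Sk_eq_span_if_subset:
  assumes M: "M \<in> Sk scale h n" and B: "finite B" "independent B" "card B = n" "span B \<subseteq> M"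
  shows "M = span B"
proof (rule ccontr)
  assume "M \<noteq> span B"
  then obtain y where y: "y \<in> M" "y \<notin> span B" using B(4) by blast
  obtain BM where "finite BM" "independent BM" "card BM = n" "span BM = M" "subspace M"
      and totM: "\<forall>x\<in>M. \<forall>y\<in>M. h x y = 0"
    by (rule SkE[OF M])
  have "independent (insert y B)" using B(2) y(2) by (simp add: independent_insertI)
  moreover have "insert y B \<subseteq> M" using y(1) B(4) span_superset by blast
  then have "\<forall>x\<in>insert y B. \<forall>z\<in>insert y B. h x z = 0" using totM by blast
  ultimately have "card (insert y B) \<le> n" by (rule tot_iso_card_le)
  moreover have "y \<notin> B" using y(2) span_base by blast
  ultimately show False using B(1,3) by simp
qed

lemma frame_subspaces_subset_Sk:
  assumes "is_frame scale h n p p'"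
  shows "frame_subspaces scale n p p' \<subseteq> Sk scale h n"
proof
  fix Z assume "Z \<in> frame_subspaces scale n p p'"
  then obtain c where Z: "Z = span (frame_vec p p' c ` {..<n})"
    unfolding frame_subspaces_def frame_vec_def by blast
  note basis = frame_vec_basis[OF assms order_refl, of c]
  have "card (frame_vec p p' c ` {..<n}) = n" using basis(2) by (simp add: card_image)
  then show "Z \<in> Sk scale h n" unfolding Z using span_in_Sk basis(1,3) by blast
qed

lemma hyperbolic_perp_basis:
  assumes M: "M \<in> Sk scale h n" and ab: "h a a = 0" "h a b \<noteq> 0"
    and BY: "BY \<subseteq> M" "independent BY" "\<forall>y\<in>BY. h y a = 0 \<and> h y b = 0"
  obtains B where "BY \<subseteq> B" "B \<subseteq> M" "independent B" "finite B"
    "\<forall>y\<in>B. h y a = 0 \<and> h y b = 0" "\<forall>y\<in>M. h y a = 0 \<and> h y b = 0 \<longrightarrow> y \<in> span B"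
    "card B = n - 1 \<or> card B = n - 2"
proof -
  obtain BM where BM: "finite BM" "independent BM" "card BM = n" "span BM = M" "subspace M"
      "\<forall>x\<in>M. \<forall>y\<in>M. h x y = 0"
    by (rule SkE[OF M])
  define K where "K = {y \<in> M. h y a = 0 \<and> h y b = 0}"
  obtain B where B: "BY \<subseteq> B" "B \<subseteq> K" "independent B" "K \<subseteq> span B"
    by (rule maximal_independent_subset_extend[of BY K]) (use BY in \<open>auto simp: K_def\<close>)
  have BM': "B \<subseteq> M" "\<forall>y\<in>B. h y a = 0 \<and> h y b = 0" using B(2) unfolding K_def by auto
  have fB: "finite B" using independent_span_bound[OF BM(1) B(3)] BM(4) BM'(1) by blast
  have "a \<notin> span B" using not_in_span_if_perp[of B b a] BM'(2) ab(2) by blast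
  then have "independent (insert a B)" "a \<notin> B"
    using B(3) span_base by (auto simp: independent_insertI)
  moreover have "\<forall>x\<in>insert a B. \<forall>y\<in>insert a B. h x y = 0"
  proof -
    have "\<forall>y\<in>B. h a y = 0" using BM'(2) h_eq_0_commute by blast
    then show ?thesis using BM(6) BM'(1,2) ab(1) by blast
  qed
  ultimately have le: "card B \<le> n - 1" using tot_iso_card_le[of "insert a B"] fB by simp
  have ge: "card B \<ge> n - 2"
  proof (rule ccontr)
    assume "\<not> ?thesis"
    then have lt: "card {a, b} + card B < card BM" using BM(3) n_ge_2 by (cases "a = b") auto
    obtain x where "x \<in> span BM" "\<forall>g\<in>{a, b}. h x g = 0" "x \<notin> span B"
      by (rule exists_perp_outside_span[OF BM(1,2) fB _ lt]) simp
    then show False using B(4) BM(4) unfolding K_def by blast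
  qed
  have "\<forall>y\<in>M. h y a = 0 \<and> h y b = 0 \<longrightarrow> y \<in> span B" using B(4) unfolding K_def by blast
  moreover have "card B = n - 1 \<or> card B = n - 2" using le ge by linarith
  ultimately show ?thesis by (rule that[OF B(1) BM'(1) B(3) fB BM'(2)])
qed

lemma two_points_through_hyperplane:
  assumes ab: "h a a = 0" "h b b = 0" "h a b \<noteq> 0" and M: "M \<in> Sk scale h n"
    and B: "B \<subseteq> M" "independent B" "finite B" "card B = n - 2"
      "\<forall>y\<in>B. h y a = 0 \<and> h y b = 0" "\<forall>y\<in>M. h y a = 0 \<and> h y b = 0 \<longrightarrow> y \<in> span B"
  obtains x z1 z2 where "x \<in> M" "x \<notin> span B"
    "\<forall>z\<in>{z1, z2}. h z z = 0 \<and> h z x = 0 \<and> h z a = 0 \<and> h z b = 0 \<and> (\<forall>y\<in>B. h y z = 0)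
       \<and> z \<notin> span (insert x B)"
    "span (insert z1 (insert x B)) \<noteq> span (insert z2 (insert x B))"
proof -
  obtain BM where BM: "finite BM" "independent BM" "card BM = n" "span BM = M" "subspace M"
      and totM: "\<forall>x\<in>M. \<forall>y\<in>M. h x y = 0"
    by (rule SkE[OF M])
  have lt: "card {a} + card B < card BM" "card {b} + card B < card BM"
    using B(4) BM(3) n_ge_2 by simp_all
  obtain xa where xa: "xa \<in> M" "h xa a = 0" "xa \<notin> span B"
    using exists_perp_outside_span[OF BM(1,2) B(3) _ lt(1)] BM(4) by auto
  obtain xb where xb: "xb \<in> M" "h xb b = 0" "xb \<notin> span B"
    using exists_perp_outside_span[OF BM(1,2) B(3) _ lt(2)] BM(4) by auto
  have ne: "h xa b \<noteq> 0" "h xb a \<noteq> 0" using xa xb B(6) by blast+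
  have iso: "h xa xa = 0" "h xb xb = 0" "h xa xb = 0" using totM xa(1) xb(1) by blast+
  obtain c c' \<alpha> \<beta> where cc: "xa = c + scale \<alpha> a" "xb = c' + scale \<beta> b"
      "h c c = 0" "h c' c' = 0" "h c c' \<noteq> 0" "h c a = 0" "h c b = 0" "h c' a = 0" "h c' b = 0"
    by (rule split_off_hyperbolic_pair[OF ab iso xa(2) xb(2) ne])
  have Bc: "\<forall>y\<in>B. h y c = 0 \<and> h y c' = 0"
  proof
    fix y assume y: "y \<in> B"
    then have "h y xa = 0" "h y xb = 0" using B(1) xa(1) xb(1) totM by blast+
    then show "h y c = 0 \<and> h y c' = 0" using B(5) y unfolding cc by simp
  qed
  have "card (B \<union> {a, b, c, c'}) \<le> card B + card {a, b, c, c'}" by (rule card_Un_le)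
  moreover have "card {a, b, c, c'} \<le> 4" by (simp add: card_insert_if)
  ultimately have "card (B \<union> {a, b, c, c'}) \<le> n + 2" using B(4) n_ge_2 by linarith
  moreover have "h a c = 0" using cc(6) h_eq_0_commute by blast
  ultimately obtain w where w: "\<forall>y\<in>B \<union> {a, b, c, c'}. h w y = 0" "h w w \<noteq> 0"
    using exists_anisotropic_perp[of "B \<union> {a, b, c, c'}" a b c c'] B(3) ab(1,3) cc(3,5,7)
    by blast
  have wperp: "h w a = 0" "h w b = 0" "h w c = 0" "h w c' = 0" using w(1) by auto
  have Bperp: "\<forall>y\<in>B. h y b = 0 \<and> h y c = 0 \<and> h y c' = 0 \<and> h y w = 0"
    using B(5) Bc w(1) h_eq_0_commute by blast
  obtain \<nu> z1 z2 where "xa + scale \<nu> xb \<notin> span B"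
    "\<forall>z\<in>{z1, z2}. h z z = 0 \<and> h z (xa + scale \<nu> xb) = 0 \<and> h z a = 0 \<and> h z b = 0
       \<and> (\<forall>y\<in>B. h y z = 0) \<and> z \<notin> span (insert (xa + scale \<nu> xb) B)"
    "span (insert z1 (insert (xa + scale \<nu> xb) B)) \<noteq> span (insert z2 (insert (xa + scale \<nu> xb) B))"
    by (rule two_isotropic_points_perp[OF ab(2) cc(3-9) w(2) wperp Bperp cc(1,2) ne(1)])
  moreover have "xa + scale \<nu> xb \<in> M" using xa(1) xb(1) BM(5) by (simp add: subspace_add subspace_scale)
  ultimately show ?thesis using that by blast
qed

end

locale dual_polar_subspace = hermitian_polar_space +
  fixes S
  assumes subspace_S: "geom_subspace (Sk scale h n) (dual_lines scale h n) S"
begin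

definition star_in_S where
  "star_in_S Y \<longleftrightarrow> (\<forall>M\<in>Sk scale h n. Y \<subseteq> M \<longrightarrow> M \<in> S)"

lemma star_in_S_if_two_points:
  assumes "X \<in> Sk scale h (n - 1)" "P1 \<in> Sk scale h n" "P2 \<in> Sk scale h n" "P1 \<noteq> P2"
    "X \<subseteq> P1" "X \<subseteq> P2" "P1 \<in> S" "P2 \<in> S"
  shows "star_in_S X"
proof -
  define l where "l = {Z \<in> Sk scale h n. X \<subseteq> Z}"
  have "l \<in> dual_lines scale h n" unfolding l_def dual_lines_def using assms(1) by blast
  moreover have "P1 \<in> l \<inter> S" "P2 \<in> l \<inter> S" using assms unfolding l_def by auto
  ultimately have "l \<subseteq> S" using subspace_S assms(4) unfolding geom_subspace_def by blast
  then show ?thesis unfolding star_in_S_def l_def by blast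
qed

lemma star_in_S_codim1:
  assumes B: "finite B" "independent B" "card B = n - 1" "\<forall>x\<in>B. \<forall>y\<in>B. h x y = 0"
    and ab: "h a a = 0" "h b b = 0" "h a b \<noteq> 0" "\<forall>y\<in>B. h y a = 0 \<and> h y b = 0"
    and Y: "Y \<subseteq> span B" "star_in_S (span (insert a Y))" "star_in_S (span (insert b Y))"
  shows "star_in_S (span B)"
proof -
  have point: "span (insert u B) \<in> Sk scale h n \<and> span (insert u B) \<in> S"
    if u: "h u u = 0" "\<forall>y\<in>B. h y u = 0" "h u g \<noteq> 0" "\<forall>y\<in>B. h y g = 0"
      "star_in_S (span (insert u Y))" for u g
  proof -
    have uB: "u \<notin> span B" using not_in_span_if_perp u(3,4) by blast
    then have "u \<notin> B" using span_base by blast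
    then have "independent (insert u B)" "card (insert u B) = n"
      using uB B(1,2,3) n_ge_2 by (simp_all add: independent_insertI)
    moreover have "\<forall>x\<in>insert u B. \<forall>y\<in>insert u B. h x y = 0"
      using B(4) u(1,2) h_eq_0_commute by blast
    ultimately have "span (insert u B) \<in> Sk scale h n" using span_in_Sk B(1) by simp
    moreover have "span (insert u Y) \<subseteq> span (insert u B)"
    proof (rule span_minimal)
      show "insert u Y \<subseteq> span (insert u B)"
        using Y(1) span_mono[of B "insert u B"] span_base[of u "insert u B"] by blast
    qed simp
    ultimately show ?thesis using u(5) unfolding star_in_S_def by blast
  qed
  have ba: "h b a \<noteq> 0" using ab(3) h_eq_0_commute by blast
  have Pa: "span (insert a B) \<in> Sk scale h n \<and> span (insert a B) \<in> S"
    by (rule point[of a b]) (use ab Y(2) in auto)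
  have Pb: "span (insert b B) \<in> Sk scale h n \<and> span (insert b B) \<in> S"
    by (rule point[of b a]) (use ab ba Y(3) in auto)
  have "span (insert a B) \<noteq> span (insert b B)"
  proof
    assume "span (insert a B) = span (insert b B)"
    then have "b \<in> span (insert a B)" using span_base[of b "insert b B"] by simp
    then have "b \<in> span B" by (rule in_span_insert_perp[where g = b]) (use ab in auto)
    then show False using not_in_span_if_perp[of B a b] ab(4) ba by blast
  qed
  moreover have "span B \<in> Sk scale h (n - 1)" by (rule span_in_Sk[OF B])
  ultimately show ?thesis
    using star_in_S_if_two_points[of "span B"] Pa Pb span_mono[of B "insert a B"]
      span_mono[of B "insert b B"] by blast
qed

text \<open>If M meets the orthogonal complement of the hyperbolic pair only in codimension 2, choose an
  (n-1)-space X of M and two further points through X, each containing an (n-1)-space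
  orthogonal to a and b; these lie in S by the codimension 1 case, hence so does M.\<close>
lemma star_in_S_codim2:
  assumes ab: "h a a = 0" "h b b = 0" "h a b \<noteq> 0" and M: "M \<in> Sk scale h n"
    and B: "B \<subseteq> M" "independent B" "finite B" "card B = n - 2"
      "\<forall>y\<in>B. h y a = 0 \<and> h y b = 0" "\<forall>y\<in>M. h y a = 0 \<and> h y b = 0 \<longrightarrow> y \<in> span B"
    and Y: "Y \<subseteq> span B" "star_in_S (span (insert a Y))" "star_in_S (span (insert b Y))"
  shows "M \<in> S"
proof -
  obtain x z1 z2 where x: "x \<in> M" "x \<notin> span B"
    and z: "\<forall>z\<in>{z1, z2}. h z z = 0 \<and> h z x = 0 \<and> h z a = 0 \<and> h z b = 0 \<and> (\<forall>y\<in>B. h y z = 0)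
       \<and> z \<notin> span (insert x B)"
    and ne: "span (insert z1 (insert x B)) \<noteq> span (insert z2 (insert x B))"
    by (rule two_points_through_hyperplane[OF ab M B])
  obtain BM where "finite BM" "independent BM" "card BM = n" "span BM = M" and subM: "subspace M"
      and totM: "\<forall>x\<in>M. \<forall>y\<in>M. h x y = 0"
    by (rule SkE[OF M])
  have totX: "\<forall>u\<in>insert x B. \<forall>v\<in>insert x B. h u v = 0" using totM x(1) B(1) by blast
  have xB: "x \<notin> B" using x(2) span_base by blast
  have X: "span (insert x B) \<in> Sk scale h (n - 1)"
  proof (rule span_in_Sk[OF _ _ _ totX])
    show "independent (insert x B)" using B(2) x(2) by (simp add: independent_insertI)
    show "card (insert x B) = n - 1" using B(3,4) xB n_ge_2 by simp
  qed (use B(3) in simp)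
  have P: "span (insert z (insert x B)) \<in> Sk scale h n \<and> span (insert z (insert x B)) \<in> S"
    if "z \<in> {z1, z2}" for z
  proof -
    have zz: "h z z = 0" "h z x = 0" "h z a = 0" "h z b = 0" "\<forall>y\<in>B. h y z = 0"
      "z \<notin> span (insert x B)" using z that by blast+
    have zB: "z \<notin> span B" using zz(6) span_mono[of B "insert x B"] by blast
    have "z \<notin> insert x B" using zz(6) span_base by blast
    then have cards: "card (insert z B) = n - 1" "card (insert z (insert x B)) = n"
      using B(3,4) xB n_ge_2 by auto
    have tot: "\<forall>u\<in>insert z B. \<forall>v\<in>insert z B. h u v = 0"
      using totX zz(1,5) h_eq_0_commute by blast
    have "star_in_S (span (insert z B))"
    proof (rule star_in_S_codim1[OF _ _ cards(1) tot ab _ _ Y(2,3)])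
      show "independent (insert z B)" using B(2) zB by (simp add: independent_insertI)
      show "\<forall>y\<in>insert z B. h y a = 0 \<and> h y b = 0" using B(5) zz(3,4) by blast
      show "Y \<subseteq> span (insert z B)" using Y(1) span_mono[of B "insert z B"] by blast
    qed (use B(3) in simp)
    moreover have "span (insert z (insert x B)) \<in> Sk scale h n"
    proof (rule span_in_Sk[OF _ _ cards(2)])
      show "independent (insert z (insert x B))"
        using B(2) x(2) zz(6) by (simp add: independent_insertI)
      show "\<forall>u\<in>insert z (insert x B). \<forall>v\<in>insert z (insert x B). h u v = 0"
        using totX zz(1,2,5) h_eq_0_commute by blast
    qed (use B(3) in simp)
    moreover have "span (insert z B) \<subseteq> span (insert z (insert x B))" by (rule span_mono) blast
    ultimately show ?thesis unfolding star_in_S_def by blast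
  qed
  have "span (insert x B) \<subseteq> span (insert z (insert x B))" for z by (rule span_mono) blast
  then have "star_in_S (span (insert x B))"
    using star_in_S_if_two_points[OF X _ _ ne] P by blast
  moreover have "span (insert x B) \<subseteq> M" using x(1) B(1) subM by (simp add: span_minimal)
  ultimately show ?thesis using M unfolding star_in_S_def by blast
qed

lemma star_in_S_hyperbolic_step:
  assumes ab: "h a a = 0" "h b b = 0" "h a b \<noteq> 0" "\<forall>y\<in>Y. h y a = 0 \<and> h y b = 0"
    and Y: "independent Y" "star_in_S (span (insert a Y))" "star_in_S (span (insert b Y))"
  shows "star_in_S (span Y)"
  unfolding star_in_S_def
proof (intro ballI impI)
  fix M assume M: "M \<in> Sk scale h n" "span Y \<subseteq> M"
  obtain BM where "finite BM" "independent BM" "card BM = n" "span BM = M" and subM: "subspace M"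
      and totM: "\<forall>x\<in>M. \<forall>y\<in>M. h x y = 0"
    by (rule SkE[OF M(1)])
  obtain B where B: "Y \<subseteq> B" "B \<subseteq> M" "independent B" "finite B"
      "\<forall>y\<in>B. h y a = 0 \<and> h y b = 0" "\<forall>y\<in>M. h y a = 0 \<and> h y b = 0 \<longrightarrow> y \<in> span B"
      "card B = n - 1 \<or> card B = n - 2"
    by (rule hyperbolic_perp_basis[OF M(1) ab(1,3) _ Y(1) ab(4)]) (use M(2) span_superset in blast)
  have YB: "Y \<subseteq> span B" using B(1) span_superset by blast
  from B(7) show "M \<in> S"
  proof
    assume "card B = n - 1"
    moreover have "\<forall>x\<in>B. \<forall>y\<in>B. h x y = 0" using B(2) totM by blast
    ultimately have "star_in_S (span B)" using star_in_S_codim1 B(3,4,5) ab(1-3) YB Y(2,3) by blast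
    moreover have "span B \<subseteq> M" using B(2) subM by (simp add: span_minimal)
    ultimately show "M \<in> S" using M(1) unfolding star_in_S_def by blast
  next
    assume "card B = n - 2"
    then show "M \<in> S" using star_in_S_codim2[OF ab(1-3) M(1) B(2,3,4) _ B(5,6) YB Y(2,3)] by blast
  qed
qed

lemma star_in_S_frame_prefix:
  assumes frame: "is_frame scale h n p p'" and F: "frame_subspaces scale n p p' \<subseteq> S"
    and "j \<le> n"
  shows "star_in_S (span (frame_vec p p' c ` {..<j}))"
  using \<open>j \<le> n\<close>
proof (induction j arbitrary: c rule: inc_induct)
  case base
  note basis = frame_vec_basis[OF frame order_refl, of c]
  have card: "card (frame_vec p p' c ` {..<n}) = n" using basis(2) by (simp add: card_image)
  have "span (frame_vec p p' c ` {..<n}) \<in> S"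
    using F unfolding frame_subspaces_def frame_vec_def by blast
  then show ?case
    using Sk_eq_span_if_subset[OF _ _ basis(1) card] unfolding star_in_S_def by (metis finite_imageI finite_lessThan)
next
  case (step j)
  let ?Y = "frame_vec p p' c ` {..<j}"
  have "{..<j} \<subseteq> {..<n}" using step(2) by auto
  note Y = frame_vec_basis[OF frame this, of c]
  have ab: "h (p j) (p j) = 0" "h (p' j) (p' j) = 0" "h (p j) (p' j) \<noteq> 0"
    using frame_orthogonality[OF frame step(2) step(2)] by auto
  have perp: "\<forall>y\<in>?Y. h y (p j) = 0 \<and> h y (p' j) = 0"
    using frame_orthogonality[OF frame] h_eq_0_commute step(2) unfolding frame_vec_def by auto
  have "insert (p j) ?Y = frame_vec p p' (c(j := True)) ` {..<Suc j}"
    "insert (p' j) ?Y = frame_vec p p' (c(j := False)) ` {..<Suc j}"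
    unfolding frame_vec_def lessThan_Suc by auto
  then show ?case using star_in_S_hyperbolic_step[OF ab perp Y(1)] step.IH by metis
qed

lemma Sk_subset_if_frame_subspaces:
  assumes "is_frame scale h n p p'" "frame_subspaces scale n p p' \<subseteq> S"
  shows "Sk scale h n \<subseteq> S"
proof
  fix M assume M: "M \<in> Sk scale h n"
  have "star_in_S (span (frame_vec p p' (\<lambda>_. True) ` {..<0}))"
    by (rule star_in_S_frame_prefix[OF assms]) simp
  moreover have "span (frame_vec p p' (\<lambda>_. True) ` {..<0}) \<subseteq> M"
    using M by (auto elim: SkE simp: subspace_0)
  ultimately show "M \<in> S" using M unfolding star_in_S_def by blast
qed

end

theorem mainTheorem3:
  fixes scale :: "'k::field \<Rightarrow> 'v::ab_group_add \<Rightarrow> 'v"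
    and \<sigma> :: "'k \<Rightarrow> 'k"
    and h :: "'v \<Rightarrow> 'v \<Rightarrow> 'k"
    and n :: nat
    and p p' :: "nat \<Rightarrow> 'v"
  assumes "vector_space scale"
    and "inv_field_aut \<sigma>"
    and "sigma_hermitian scale \<sigma> h"
    and "nondegenerate h"
    and "witt_index scale h n"
    and "n \<ge> 2"
    and "positive_defect scale h n"
    and "is_frame scale h n p p'"
  shows "generates (dual_points scale h n) (dual_lines scale h n) (frame_subspaces scale n p p')"
proof -
  interpret hermitian_polar_space scale \<sigma> h n
    using assms by (intro hermitian_polar_space.intro hermitian_form.intro
        hermitian_form_axioms.intro hermitian_polar_space_axioms.intro) simp_all
  let ?P = "Sk scale h n" and ?L = "dual_lines scale h n" and ?F = "frame_subspaces scale n p p'"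
  have "?P \<subseteq> S" if "geom_subspace ?P ?L S" "?F \<subseteq> S" for S
  proof -
    interpret dual_polar_subspace scale \<sigma> h n S by unfold_locales (rule that(1))
    show ?thesis by (rule Sk_subset_if_frame_subspaces[OF assms(8) that(2)])
  qed
  moreover have "geom_subspace ?P ?L ?P" unfolding geom_subspace_def dual_lines_def by blast
  ultimately have "\<Inter> {S. geom_subspace ?P ?L S \<and> ?F \<subseteq> S} = ?P"
    using frame_subspaces_subset_Sk[OF assms(8)] by blast
  then show ?thesis unfolding generates_def dual_points_def .
qed

end
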